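(* Let $m$ and $n$ be positive integers. A layer-rainbow latin cube of order $m$ can be extended to (i.e., embedded as the $m\times m\times m$ subarray on the first $m$ indices in each coordinate of) a layer-rainbow latin cube of order $n$ if and only if $n\geq 2m$.
   Context: An $n\times n\times n$ array $L$ has cells indexed by triples $(i,j,k)$ with $i,j,k\in\{1,\dots,n\}$. A layer of $L$ is the set of cells obtained by fixing one coordinate (so there are $3n$ layers, each containing $n^2$ cells). $L$ is a layer-rainbow latin cube of order $n$ if each cell is filled with one of $n^2$ symbols such that every layer contains every symbol exactly once. A layer-rainbow latin cube $M$ of order $m$ is extended to a layer-rainbow latin cube $L$ of order $n$ if $L$ restricted to the cells $\{1,\dots,m\}^3$ coincides with $M$ (the $m^2$ symbols of $M$ being among the $n^2$ symbols of $L$). *)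

theory Defs
  imports Main
begin

text \<open>Symbols are natural numbers
  (any countably infinite supply of symbols would do).\<close>
definition layer_rainbow :: "nat \<Rightarrow> nat set \<Rightarrow> (nat \<Rightarrow> nat \<Rightarrow> nat \<Rightarrow> nat) \<Rightarrow> bool" where
  "layer_rainbow n S L \<longleftrightarrow>
     card S = n ^ 2 \<and>
     (\<forall>i\<in>{1..n}. bij_betw (\<lambda>(j, k). L i j k) ({1..n} \<times> {1..n}) S) \<and>
     (\<forall>j\<in>{1..n}. bij_betw (\<lambda>(i, k). L i j k) ({1..n} \<times> {1..n}) S) \<and>
     (\<forall>k\<in>{1..n}. bij_betw (\<lambda>(i, j). L i j k) ({1..n} \<times> {1..n}) S)"

definition extends_cube :: "nat \<Rightarrow> nat set \<Rightarrow> (nat \<Rightarrow> nat \<Rightarrow> nat \<Rightarrow> nat) \<Rightarrow>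
    nat \<Rightarrow> nat set \<Rightarrow> (nat \<Rightarrow> nat \<Rightarrow> nat \<Rightarrow> nat) \<Rightarrow> bool" where
  "extends_cube m S M n T L \<longleftrightarrow>
     S \<subseteq> T \<and> (\<forall>i\<in>{1..m}. \<forall>j\<in>{1..m}. \<forall>k\<in>{1..m}. L i j k = M i j k)"

end

theory Submission
  imports Defs
begin

(* Necessity: let s be a symbol of M and look at the layer k = m + 1 of L.  If s sat there in a
   row i \<le> m, then layer i of L would contain s twice, once inside the subcube (where L = M) and
   once outside it; likewise for columns.  So the m^2 symbols of M occupy cells (i, j) with
   i, j > m of that layer, whence m^2 \<le> (n - m)^2.

   Sufficiency: let Q be a latin square of order n with a latin subsquare on {1..m}; for n \<ge> 2m
   it is assembled from a cyclic square of order m and a partial orthomorphism of Z_(n-m), which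
   exists since only n - 2m < n - m of its values are needed.  Every layer of the cube
   (i, j, k) \<mapsto> (Q i k, Q j k) is a bijection onto the pairs of symbols of Q, and the subcube
   goes onto the pairs of subsquare symbols.  Relabel these m^2 pairs by the symbols of M,
   all other pairs by fresh symbols, and overwrite the subcube by M itself. *)

definition latin_square :: "'a set \<Rightarrow> 'b set \<Rightarrow> ('a \<Rightarrow> 'a \<Rightarrow> 'b) \<Rightarrow> bool" where
  "latin_square N X Q \<longleftrightarrow>
     (\<forall>i\<in>N. bij_betw (Q i) N X) \<and> (\<forall>j\<in>N. bij_betw (\<lambda>i. Q i j) N X)"

lemma bij_betw_if_inj_on_card:
  assumes "inj_on f A" "f ` A \<subseteq> B" "card A = card B" "finite B"
  shows "bij_betw f A B"
  using assms card_image card_subset_eq unfolding bij_betw_def by metis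

lemma latin_squareI:
  assumes "finite X" "card N = card X" "\<And>i j. i \<in> N \<Longrightarrow> j \<in> N \<Longrightarrow> Q i j \<in> X"
    and "\<And>i. i \<in> N \<Longrightarrow> inj_on (Q i) N" "\<And>j. j \<in> N \<Longrightarrow> inj_on (\<lambda>i. Q i j) N"
  shows "latin_square N X Q"
  using assms unfolding latin_square_def by (auto intro!: bij_betw_if_inj_on_card)

lemma latin_square_reindex:
  assumes "bij_betw \<phi> N' N" "latin_square N X Q"
  shows "latin_square N' X (\<lambda>i j. Q (\<phi> i) (\<phi> j))"
proof -
  have "bij_betw (f \<circ> \<phi>) N' X" if "bij_betw f N X" for f
    using bij_betw_trans[OF assms(1) that] .
  then show ?thesis
    using assms bij_betw_apply[OF assms(1)] unfolding latin_square_def comp_def by auto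
qed

lemma latin_square_pair_layer:
  assumes "latin_square N X Q" "c \<in> N"
  shows "bij_betw (\<lambda>(j, k). (Q c k, Q j k)) (N \<times> N) (X \<times> X)"
proof -
  have row: "bij_betw (Q c) N X" and col: "\<And>k. k \<in> N \<Longrightarrow> bij_betw (\<lambda>j. Q j k) N X"
    using assms unfolding latin_square_def by auto
  show ?thesis
    unfolding bij_betw_def
  proof
    show "inj_on (\<lambda>(j, k). (Q c k, Q j k)) (N \<times> N)"
    proof (rule inj_onI, clarsimp)
      fix j k j' k' assume "j \<in> N" "k \<in> N" "j' \<in> N" "k' \<in> N" "Q c k = Q c k'" "Q j k = Q j' k'"
      moreover from this have "k = k'"
        using bij_betw_imp_inj_on[OF row] by (simp add: inj_on_eq_iff)
      ultimately show "j = j' \<and> k = k'"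
        using col[of k'] by (metis bij_betw_imp_inj_on inj_onD)
    qed
    show "(\<lambda>(j, k). (Q c k, Q j k)) ` (N \<times> N) = X \<times> X"
    proof (rule subset_antisym)
      show "(\<lambda>(j, k). (Q c k, Q j k)) ` (N \<times> N) \<subseteq> X \<times> X"
        using row col bij_betw_apply by fastforce
    next
      show "X \<times> X \<subseteq> (\<lambda>(j, k). (Q c k, Q j k)) ` (N \<times> N)"
      proof safe
        fix x y assume "x \<in> X" "y \<in> X"
        then obtain k where k: "k \<in> N" "Q c k = x"
          using row bij_betw_imp_surj_on by blast
        then obtain j where "j \<in> N" "Q j k = y"
          using col[OF k(1)] \<open>y \<in> X\<close> bij_betw_imp_surj_on by (metis imageE)
        then show "(x, y) \<in> (\<lambda>(j, k). (Q c k, Q j k)) ` (N \<times> N)"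
          using k by force
      qed
    qed
  qed
qed

lemma latin_square_pair_layers:
  assumes "latin_square N X Q" "c \<in> N"
  shows "bij_betw (\<lambda>(j, k). (Q c k, Q j k)) (N \<times> N) (X \<times> X)"
    and "bij_betw (\<lambda>(i, k). (Q i k, Q c k)) (N \<times> N) (X \<times> X)"
    and "bij_betw (\<lambda>(i, j). (Q i c, Q j c)) (N \<times> N) (X \<times> X)"
proof -
  show "bij_betw (\<lambda>(j, k). (Q c k, Q j k)) (N \<times> N) (X \<times> X)"
    using latin_square_pair_layer[OF assms] .
  have "bij_betw prod.swap (X \<times> X) (X \<times> X)"
    unfolding bij_betw_def by auto
  then have "bij_betw (prod.swap \<circ> (\<lambda>(j, k). (Q c k, Q j k))) (N \<times> N) (X \<times> X)"
    using latin_square_pair_layer[OF assms] bij_betw_trans by blast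
  then show "bij_betw (\<lambda>(i, k). (Q i k, Q c k)) (N \<times> N) (X \<times> X)"
    by (simp add: comp_def case_prod_beta')
  have col: "bij_betw (\<lambda>i. Q i c) N X"
    using assms unfolding latin_square_def by auto
  show "bij_betw (\<lambda>(i, j). (Q i c, Q j c)) (N \<times> N) (X \<times> X)"
    using bij_betw_map_prod[OF col col] unfolding map_prod_def .
qed

lemma bij_betw_patch:
  assumes g: "bij_betw g U T" and "U0 \<subseteq> U" and h: "bij_betw h U0 (g ` U0)"
  shows "bij_betw (\<lambda>u. if u \<in> U0 then h u else g u) U T"
proof -
  have "g ` U0 \<subseteq> T"
    using \<open>U0 \<subseteq> U\<close> bij_betw_imp_surj_on[OF g] by blast
  then have "bij_betw g (U - U0) (T - g ` U0)"
    using bij_betw_DiffI[OF g bij_betw_subset[OF g \<open>U0 \<subseteq> U\<close> refl]] \<open>U0 \<subseteq> U\<close> by blast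
  from bij_betw_disjoint_Un[OF h this] show ?thesis
    using \<open>U0 \<subseteq> U\<close> g bij_betw_imp_surj_on by (fastforce simp: Un_absorb1 image_mono)
qed

lemma ex_inj_on_nat_with_image:
  fixes S :: "nat set"
  assumes "finite V" "V0 \<subseteq> V" "finite S" "card V0 = card S"
  shows "\<exists>\<sigma> :: 'a \<Rightarrow> nat. inj_on \<sigma> V \<and> \<sigma> ` V0 = S"
proof -
  obtain \<psi> where \<psi>: "bij_betw \<psi> V0 S"
    using finite_same_card_bij assms finite_subset by metis
  obtain f :: "'a \<Rightarrow> nat" where f: "inj_on f (V - V0)"
    using finite_imp_inj_to_nat_seg[of "V - V0"] assms(1) by blast
  obtain c where c: "\<forall>s\<in>S. s < c"
    using assms(3) finite_nat_set_iff_bounded by blast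
  let ?\<sigma> = "\<lambda>v. if v \<in> V0 then \<psi> v else c + f v"
  have "inj_on ?\<sigma> (V0 \<union> (V - V0))"
  proof (rule inj_on_disjoint_Un)
    show "inj_on \<psi> V0"
      using \<psi> by (rule bij_betw_imp_inj_on)
    show "inj_on (\<lambda>v. c + f v) (V - V0)"
      using f by (simp add: inj_on_def)
    show "\<psi> ` V0 \<inter> (\<lambda>v. c + f v) ` (V - V0) = {}"
      using c bij_betw_imp_surj_on[OF \<psi>] by fastforce
  qed
  moreover have "?\<sigma> ` V0 = S"
    using bij_betw_imp_surj_on[OF \<psi>] by simp
  ultimately show ?thesis
    using assms(2) by (metis Un_Diff_cancel Un_absorb1)
qed

lemma inj_on_agreeing_preimage:
  assumes "inj_on f U" "U0 \<subseteq> U" "\<And>u. u \<in> U0 \<Longrightarrow> f u = g u" "u \<in> U" "f u \<in> g ` U0"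
  shows "u \<in> U0"
proof -
  have "f ` U0 = g ` U0"
    using assms(3) by (rule image_cong[OF refl])
  then show ?thesis
    using inj_on_image_mem_iff[OF assms(1,4,2)] assms(5) by simp
qed

lemma mod_add_right_eq_iff:
  fixes a b c m :: int
  assumes "a \<in> {0..<m}" "b \<in> {0..<m}"
  shows "(a + c) mod m = (b + c) mod m \<longleftrightarrow> a = b"
proof
  assume "(a + c) mod m = (b + c) mod m"
  from mod_add_cong[OF this refl, of "- c"] have "a mod m = b mod m"
    by simp
  then show "a = b"
    using assms by simp
qed simp

lemma mod_add_left_eq_iff:
  fixes a b c m :: int
  assumes "a \<in> {0..<m}" "b \<in> {0..<m}"
  shows "(c + a) mod m = (c + b) mod m \<longleftrightarrow> a = b"
  using mod_add_right_eq_iff[OF assms] by (metis add.commute)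

lemma mod_diff_left_eq_iff:
  fixes a b c m :: int
  assumes "a \<in> {0..<m}" "b \<in> {0..<m}"
  shows "(a - c) mod m = (b - c) mod m \<longleftrightarrow> a = b"
  using mod_add_right_eq_iff[OF assms, of "- c"] by simp

lemma mod_diff_right_eq_iff:
  fixes a b c m :: int
  assumes "a \<in> {0..<m}" "b \<in> {0..<m}"
  shows "(c - a) mod m = (c - b) mod m \<longleftrightarrow> a = b"
proof
  assume "(c - a) mod m = (c - b) mod m"
  from mod_diff_cong[OF refl this, of c] have "a mod m = b mod m"
    by simp
  then show "a = b"
    using assms by simp
qed simp

definition partial_orthomorphism :: "int \<Rightarrow> int set \<Rightarrow> (int \<Rightarrow> int) \<Rightarrow> bool" where
  "partial_orthomorphism k D h \<longleftrightarrow>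
     h ` D \<subseteq> {0..<k} \<and> inj_on h D \<and> inj_on (\<lambda>d. (h d - d) mod k) D"

(* For odd k, d \<mapsto> 2d is a complete orthomorphism of Z_k.  For even k, 2 is not invertible,
   and the upper half d \<ge> k/2 is sent to the odd residues 2d - k + 1 instead; this only works
   because d = k - 1 is excluded. *)
lemma ex_partial_orthomorphism:
  assumes "r < k"
  shows "\<exists>h. partial_orthomorphism k {0..<r} h"
proof -
  define \<epsilon> :: int where "\<epsilon> = (if even k then 1 else 0)"
  define h where "h d = (if 2 * d < k then 2 * d else 2 * d - k + \<epsilon>)" for d
  define g where "g d = (if 2 * d < k then d else d + \<epsilon>)" for d
  have \<epsilon>: "\<epsilon> = 0 \<or> \<epsilon> = 1" "\<epsilon> = 1 \<longleftrightarrow> even k"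
    by (auto simp: \<epsilon>_def)
  have diff: "(h d - d) mod k = g d" if "d \<in> {0..<r}" for d
  proof -
    have "(h d - d) mod k = g d mod k"
      by (simp add: h_def g_def algebra_simps)
    also have "\<dots> = g d"
      using that assms \<epsilon> by (intro mod_pos_pos_trivial) (auto simp: g_def)
    finally show ?thesis .
  qed
  have "h ` {0..<r} \<subseteq> {0..<k}"
    using assms \<epsilon> by (auto simp: h_def)
  moreover have "inj_on h {0..<r}"
    using \<epsilon> unfolding inj_on_def h_def by auto presburger+
  moreover have "inj_on (\<lambda>d. (h d - d) mod k) {0..<r}"
    using \<epsilon> unfolding inj_on_def by (auto simp: diff g_def)
  ultimately show ?thesis
    unfolding partial_orthomorphism_def by blast
qed

lemma border_diagonal_inj:
  fixes c k m r :: int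
  assumes \<epsilon>: "inj_on \<epsilon> {0..<m}" "\<epsilon> ` {0..<m} \<subseteq> {0..<k} - f ` {0..<r}"
    and f: "inj_on f {0..<r}" "f ` {0..<r} \<subseteq> {0..<k}"
    and \<delta>: "inj_on \<delta> {0..<k}" "\<delta> ` {0..<k} \<subseteq> {0..<k}"
  shows "inj_on (\<lambda>b. case b of
      Inl j \<Rightarrow> Inr ((c + \<epsilon> j) mod k)
    | Inr z \<Rightarrow> (if \<delta> z < r then Inr ((c + f (\<delta> z)) mod k) else Inl (\<delta> z - r)))
    ({0..<m} <+> {0..<k})" (is "inj_on ?F ?I")
proof (rule inj_onI)
  fix b b' assume b: "b \<in> ?I" "b' \<in> ?I" and "?F b = ?F b'"
  moreover have "\<epsilon> j \<in> {0..<k}" if "j \<in> {0..<m}" for j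
    using \<epsilon>(2) that by blast
  moreover have "f d \<in> {0..<k}" if "d \<in> {0..<r}" for d
    using f(2) that by blast
  moreover have "\<delta> z \<in> {0..<k}" if "z \<in> {0..<k}" for z
    using \<delta>(2) that by blast
  moreover have new: "\<epsilon> j \<noteq> f d" if "j \<in> {0..<m}" "d \<in> {0..<r}" for j d
    using \<epsilon>(2) that by blast
  ultimately show "b = b'"
    using new[THEN not_sym]
    by (cases b; cases b')
      (auto split: if_splits simp: mod_add_left_eq_iff
        dest!: inj_onD[OF \<epsilon>(1)] inj_onD[OF f(1)] inj_onD[OF \<delta>(1)])
qed

(* Rows and columns are indexed by Inl i (i < m, the subsquare) and Inr x (x < k); the symbols
   are Inl s (s < m, the symbols of the subsquare) and Inr z (z \<in> Z_k, new symbols).  The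
   bottom-right block carries the m old symbols on the diagonals d = y - x \<ge> k - m, and the new
   symbol x + h d on the other diagonals; e and e' fill the border blocks with the new symbols
   that are missing from each column and row of that block. *)
fun prolongation :: "int \<Rightarrow> int \<Rightarrow> (int \<Rightarrow> int) \<Rightarrow> (int \<Rightarrow> int) \<Rightarrow> (int \<Rightarrow> int) \<Rightarrow>
    int + int \<Rightarrow> int + int \<Rightarrow> int + int" where
  "prolongation m k h e e' (Inl i) (Inl j) = Inl ((i + j) mod m)"
| "prolongation m k h e e' (Inl i) (Inr y) = Inr ((y + e i) mod k)"
| "prolongation m k h e e' (Inr x) (Inl j) = Inr ((x + e' j) mod k)"
| "prolongation m k h e e' (Inr x) (Inr y) =
     (let d = (y - x) mod k in if d < k - m then Inr ((x + h d) mod k) else Inl (d - (k - m)))"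

lemma prolongation_subsquare:
  assumes "0 < m"
  shows "latin_square (Inl ` {0..<m}) (Inl ` {0..<m}) (prolongation m k h e e')"
  using assms
  by (intro latin_squareI)
    (auto simp: card_image inj_on_def mod_add_left_eq_iff mod_add_right_eq_iff)

locale prolongation_data =
  fixes m k :: int and h e e' :: "int \<Rightarrow> int"
  assumes m_pos: "0 < m" and m_le_k: "m \<le> k"
    and orth: "partial_orthomorphism k {0..<k - m} h"
    and e: "bij_betw e {0..<m} ({0..<k} - (\<lambda>d. (h d - d) mod k) ` {0..<k - m})"
    and e': "bij_betw e' {0..<m} ({0..<k} - h ` {0..<k - m})"
begin

abbreviation I where "I \<equiv> {0..<m} <+> {0..<k}"
abbreviation P where "P \<equiv> prolongation m k h e e'"

lemma k_pos: "0 < k"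
  using m_pos m_le_k by simp

lemma row_inj:
  assumes "a \<in> I"
  shows "inj_on (P a) I"
proof (cases a)
  case (Inl i)
  then show ?thesis
    using assms unfolding inj_on_def by (auto simp: mod_add_left_eq_iff mod_add_right_eq_iff)
next
  case (Inr x)
  have "inj_on (\<lambda>b. case b of
      Inl j \<Rightarrow> Inr ((x + e' j) mod k)
    | Inr y \<Rightarrow> (if (y - x) mod k < k - m then Inr ((x + h ((y - x) mod k)) mod k)
               else Inl ((y - x) mod k - (k - m)))) I"
  proof (rule border_diagonal_inj)
    show "inj_on e' {0..<m}" "e' ` {0..<m} \<subseteq> {0..<k} - h ` {0..<k - m}"
      using e' by (auto simp: bij_betw_def)
    show "inj_on h {0..<k - m}" "h ` {0..<k - m} \<subseteq> {0..<k}"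
      using orth by (auto simp: partial_orthomorphism_def)
    show "inj_on (\<lambda>y. (y - x) mod k) {0..<k}" "(\<lambda>y. (y - x) mod k) ` {0..<k} \<subseteq> {0..<k}"
      using k_pos by (auto simp: inj_on_def mod_diff_left_eq_iff)
  qed
  moreover have "P (Inr x) = (\<lambda>b. case b of
      Inl j \<Rightarrow> Inr ((x + e' j) mod k)
    | Inr y \<Rightarrow> (if (y - x) mod k < k - m then Inr ((x + h ((y - x) mod k)) mod k)
               else Inl ((y - x) mod k - (k - m))))"
    by (rule ext) (simp add: Let_def split: sum.split)
  ultimately show ?thesis
    using Inr by simp
qed

lemma col_inj:
  assumes "b \<in> I"
  shows "inj_on (\<lambda>a. P a b) I"
proof (cases b)
  case (Inl j)
  then show ?thesis
    using assms unfolding inj_on_def by (auto simp: mod_add_left_eq_iff mod_add_right_eq_iff)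
next
  case (Inr y)
  let ?g = "\<lambda>d. (h d - d) mod k"
  have "inj_on (\<lambda>a. case a of
      Inl i \<Rightarrow> Inr ((y + e i) mod k)
    | Inr x \<Rightarrow> (if (y - x) mod k < k - m then Inr ((y + ?g ((y - x) mod k)) mod k)
               else Inl ((y - x) mod k - (k - m)))) I"
  proof (rule border_diagonal_inj)
    show "inj_on e {0..<m}" "e ` {0..<m} \<subseteq> {0..<k} - ?g ` {0..<k - m}"
      using e by (auto simp: bij_betw_def)
    show "inj_on ?g {0..<k - m}" "?g ` {0..<k - m} \<subseteq> {0..<k}"
      using orth k_pos by (auto simp: partial_orthomorphism_def)
    show "inj_on (\<lambda>x. (y - x) mod k) {0..<k}" "(\<lambda>x. (y - x) mod k) ` {0..<k} \<subseteq> {0..<k}"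
      using k_pos by (auto simp: inj_on_def mod_diff_right_eq_iff)
  qed
  moreover have "(x + h d) mod k = (y + ?g d) mod k" if "d = (y - x) mod k" for x d
    using that by (simp add: mod_simps algebra_simps)
  then have "(\<lambda>a. P a (Inr y)) = (\<lambda>a. case a of
      Inl i \<Rightarrow> Inr ((y + e i) mod k)
    | Inr x \<Rightarrow> (if (y - x) mod k < k - m then Inr ((y + ?g ((y - x) mod k)) mod k)
               else Inl ((y - x) mod k - (k - m))))"
    by (intro ext) (simp add: Let_def split: sum.split)
  ultimately show ?thesis
    using Inr by simp
qed

lemma prolongation_latin_square: "latin_square I I P"
proof (rule latin_squareI)
  show "P a b \<in> I" if "a \<in> I" "b \<in> I" for a b
    using that m_pos k_pos by (auto simp: Let_def)
qed (simp_all add: row_inj col_inj)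

end

lemma ex_latin_square_with_subsquare:
  fixes m n :: nat
  assumes "0 < m" "2 * m \<le> n"
  shows "\<exists>(Q :: nat \<Rightarrow> nat \<Rightarrow> int + int) X X0.
           latin_square {1..n} X Q \<and> latin_square {1..m} X0 Q \<and> X0 \<subseteq> X"
proof -
  define k where "k = int n - int m"
  define D where "D = {0..<k - int m}"
  have "0 < k"
    using assms by (simp add: k_def)
  obtain h where h: "partial_orthomorphism k D h"
    using ex_partial_orthomorphism[of "k - int m" k] assms unfolding D_def by auto
  have complement: "\<exists>\<epsilon>. bij_betw \<epsilon> {0..<int m} ({0..<k} - f ` D)"
    if "inj_on f D" "f ` D \<subseteq> {0..<k}" for f
  proof (rule finite_same_card_bij)
    show "card {0..<int m} = card ({0..<k} - f ` D)"
      using that assms by (simp add: card_Diff_subset card_image D_def k_def)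
  qed simp_all
  have "(\<lambda>d. (h d - d) mod k) ` D \<subseteq> {0..<k}"
    using \<open>0 < k\<close> by auto
  then obtain e where "bij_betw e {0..<int m} ({0..<k} - (\<lambda>d. (h d - d) mod k) ` D)"
    using complement[of "\<lambda>d. (h d - d) mod k"] h unfolding partial_orthomorphism_def by blast
  moreover obtain e' where "bij_betw e' {0..<int m} ({0..<k} - h ` D)"
    using complement[of h] h by (auto simp: partial_orthomorphism_def)
  ultimately interpret prolongation_data "int m" k h e e'
    using h assms by unfold_locales (auto simp: k_def D_def)
  define \<phi> where "\<phi> i = (if i \<le> m then Inl (int i - 1) else Inr (int i - 1 - int m))" for i :: nat
  have "bij_betw \<phi> {1..n} ({0..<int m} <+> {0..<k})"
    using assms by (intro bij_betw_if_inj_on_card) (auto simp: \<phi>_def inj_on_def card_Plus k_def)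
  moreover have "bij_betw \<phi> {1..m} (Inl ` {0..<int m})"
    by (rule bij_betw_if_inj_on_card) (auto simp: \<phi>_def inj_on_def card_image)
  ultimately show ?thesis
    using latin_square_reindex prolongation_latin_square prolongation_subsquare[OF m_pos]
    by blast
qed

lemma patched_layer_bij:
  assumes \<sigma>: "inj_on \<sigma> V" "\<sigma> ` V0 = S" and F: "bij_betw F U V"
    and F0: "c \<in> C \<Longrightarrow> bij_betw F B V0" and Mc: "c \<in> C \<Longrightarrow> bij_betw Mc B S"
    and "B \<subseteq> U"
  shows "bij_betw (\<lambda>u. if c \<in> C \<and> u \<in> B then Mc u else \<sigma> (F u)) U (\<sigma> ` V)"
proof -
  have \<sigma>F: "bij_betw (\<sigma> \<circ> F) U (\<sigma> ` V)"
    using F inj_on_imp_bij_betw[OF \<sigma>(1)] by (rule bij_betw_trans)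
  show ?thesis
  proof (cases "c \<in> C")
    case True
    have image: "(\<sigma> \<circ> F) ` B = S"
      using bij_betw_imp_surj_on[OF F0[OF True]] \<sigma>(2) by (metis image_comp)
    from bij_betw_patch[OF \<sigma>F \<open>B \<subseteq> U\<close>, unfolded image, OF Mc[OF True]] show ?thesis
      using True unfolding comp_def by simp
  next
    case False
    then show ?thesis
      using \<sigma>F unfolding comp_def by simp
  qed
qed

lemma layer_rainbow_extension_imp_le:
  assumes "m < n" and M: "layer_rainbow m S M" and L: "layer_rainbow n T L"
    and ext: "extends_cube m S M n T L"
  shows "2 * m \<le> n"
proof -
  define N A where "N = {1..n}" and "A = {1..m}"
  have "A \<subseteq> N" "m + 1 \<in> N" "m + 1 \<notin> A"
    using assms(1) by (auto simp: N_def A_def)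
  have LM: "L i j k = M i j k" if "i \<in> A" "j \<in> A" "k \<in> A" for i j k
    using ext that unfolding extends_cube_def A_def by blast
  have row_outside: "i \<notin> A" if "i \<in> N" "j \<in> N" "L i j (m + 1) \<in> S" for i j
  proof
    assume "i \<in> A"
    have "inj_on (\<lambda>(j, k). L i j k) (N \<times> N)" "(\<lambda>(j, k). M i j k) ` (A \<times> A) = S"
      using L M \<open>i \<in> N\<close> \<open>i \<in> A\<close> unfolding layer_rainbow_def bij_betw_def N_def A_def by auto
    from inj_on_agreeing_preimage[OF this(1), of "A \<times> A" "\<lambda>(j, k). M i j k" "(j, m + 1)"] this(2)
    have "(j, m + 1) \<in> A \<times> A"
      using \<open>A \<subseteq> N\<close> \<open>m + 1 \<in> N\<close> that LM[OF \<open>i \<in> A\<close>] by auto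
    then show False
      using \<open>m + 1 \<notin> A\<close> by blast
  qed
  have col_outside: "j \<notin> A" if "i \<in> N" "j \<in> N" "L i j (m + 1) \<in> S" for i j
  proof
    assume "j \<in> A"
    have "inj_on (\<lambda>(i, k). L i j k) (N \<times> N)" "(\<lambda>(i, k). M i j k) ` (A \<times> A) = S"
      using L M \<open>j \<in> N\<close> \<open>j \<in> A\<close> unfolding layer_rainbow_def bij_betw_def N_def A_def by auto
    from inj_on_agreeing_preimage[OF this(1), of "A \<times> A" "\<lambda>(i, k). M i j k" "(i, m + 1)"] this(2)
    have "(i, m + 1) \<in> A \<times> A"
      using \<open>A \<subseteq> N\<close> \<open>m + 1 \<in> N\<close> that LM[OF _ \<open>j \<in> A\<close>] by auto
    then show False
      using \<open>m + 1 \<notin> A\<close> by blast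
  qed
  have "(\<lambda>(i, j). L i j (m + 1)) ` (N \<times> N) = T"
    using L \<open>m + 1 \<in> N\<close> unfolding layer_rainbow_def bij_betw_def N_def by blast
  moreover have "S \<subseteq> T"
    using ext unfolding extends_cube_def by blast
  ultimately have S_in_layer: "S \<subseteq> (\<lambda>(i, j). L i j (m + 1)) ` (N \<times> N)"
    by (simp only:)
  have "S \<subseteq> (\<lambda>(i, j). L i j (m + 1)) ` ((N - A) \<times> (N - A))"
  proof
    fix s assume "s \<in> S"
    with S_in_layer obtain i j where ij: "i \<in> N" "j \<in> N" "L i j (m + 1) = s"
      by auto
    then have "(i, j) \<in> (N - A) \<times> (N - A)"
      using row_outside[OF ij(1,2)] col_outside[OF ij(1,2)] \<open>s \<in> S\<close> by simp
    then show "s \<in> (\<lambda>(i, j). L i j (m + 1)) ` ((N - A) \<times> (N - A))"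
      using ij(3) by force
  qed
  then have "card S \<le> card ((\<lambda>(i, j). L i j (m + 1)) ` ((N - A) \<times> (N - A)))"
    by (rule card_mono[rotated]) (simp add: N_def)
  also have "\<dots> \<le> card ((N - A) \<times> (N - A))"
    by (rule card_image_le) (simp add: N_def)
  finally have "m ^ 2 \<le> (n - m) ^ 2"
    using M \<open>A \<subseteq> N\<close> unfolding layer_rainbow_def
    by (simp add: card_cartesian_product card_Diff_subset N_def A_def power2_eq_square)
  then show ?thesis
    using power_le_imp_le_base[of m 1 "n - m"] by (simp add: numeral_2_eq_2)
qed

lemma layer_rainbow_extension_exists:
  assumes "0 < m" "2 * m \<le> n" "layer_rainbow m S M"
  shows "\<exists>T L. layer_rainbow n T L \<and> extends_cube m S M n T L"
proof -
  define N A where "N = {1..n}" and "A = {1..m}"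
  have "A \<times> A \<subseteq> N \<times> N"
    using assms(2) by (auto simp: N_def A_def)
  obtain Q :: "nat \<Rightarrow> nat \<Rightarrow> int + int" and X X0
    where Q: "latin_square N X Q" and Q0: "latin_square A X0 Q" and "X0 \<subseteq> X"
    using ex_latin_square_with_subsquare[OF assms(1,2)] unfolding N_def A_def by blast
  have row: "bij_betw (Q 1) N X" and row0: "bij_betw (Q 1) A X0"
    using Q Q0 assms unfolding latin_square_def N_def A_def by auto
  have X: "finite X" "card X = n" and "card X0 = m"
    using bij_betw_finite[OF row] bij_betw_same_card[OF row] bij_betw_same_card[OF row0]
    by (simp_all add: N_def A_def)
  moreover have "card S = m ^ 2"
    using assms(3) unfolding layer_rainbow_def by blast
  ultimately have card: "card (X0 \<times> X0) = card S" and "finite S"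
    using assms(1) by (auto simp: card_cartesian_product power2_eq_square intro: card_ge_0_finite)
  have "X0 \<times> X0 \<subseteq> X \<times> X"
    using \<open>X0 \<subseteq> X\<close> by blast
  from ex_inj_on_nat_with_image[OF finite_cartesian_product[OF X(1) X(1)] this \<open>finite S\<close> card]
  obtain \<sigma> :: "(int + int) \<times> (int + int) \<Rightarrow> nat"
    where \<sigma>: "inj_on \<sigma> (X \<times> X)" "\<sigma> ` (X0 \<times> X0) = S"
    by blast
  define L where "L i j k = (if i \<in> A \<and> j \<in> A \<and> k \<in> A then M i j k else \<sigma> (Q i k, Q j k))"
    for i j k
  have M: "\<forall>i\<in>A. bij_betw (\<lambda>(j, k). M i j k) (A \<times> A) S"
    "\<forall>j\<in>A. bij_betw (\<lambda>(i, k). M i j k) (A \<times> A) S"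
    "\<forall>k\<in>A. bij_betw (\<lambda>(i, j). M i j k) (A \<times> A) S"
    using assms(3) unfolding layer_rainbow_def A_def by auto
  have "bij_betw (\<lambda>(j, k). L i j k) (N \<times> N) (\<sigma> ` (X \<times> X))" if "i \<in> N" for i
  proof -
    have "bij_betw (\<lambda>u. if i \<in> A \<and> u \<in> A \<times> A then (\<lambda>(j, k). M i j k) u
        else \<sigma> ((\<lambda>(j, k). (Q i k, Q j k)) u)) (N \<times> N) (\<sigma> ` (X \<times> X))"
      using Q Q0 M(1) that
      by (intro patched_layer_bij[OF \<sigma> _ _ _ \<open>A \<times> A \<subseteq> N \<times> N\<close>])
        (auto intro: latin_square_pair_layers(1))
    then show ?thesis
      by (rule bij_betw_cong[THEN iffD1, rotated]) (auto simp: L_def split: if_splits)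
  qed
  moreover have "bij_betw (\<lambda>(i, k). L i j k) (N \<times> N) (\<sigma> ` (X \<times> X))" if "j \<in> N" for j
  proof -
    have "bij_betw (\<lambda>u. if j \<in> A \<and> u \<in> A \<times> A then (\<lambda>(i, k). M i j k) u
        else \<sigma> ((\<lambda>(i, k). (Q i k, Q j k)) u)) (N \<times> N) (\<sigma> ` (X \<times> X))"
      using Q Q0 M(2) that
      by (intro patched_layer_bij[OF \<sigma> _ _ _ \<open>A \<times> A \<subseteq> N \<times> N\<close>])
        (auto intro: latin_square_pair_layers(2))
    then show ?thesis
      by (rule bij_betw_cong[THEN iffD1, rotated]) (auto simp: L_def split: if_splits)
  qed
  moreover have "bij_betw (\<lambda>(i, j). L i j k) (N \<times> N) (\<sigma> ` (X \<times> X))" if "k \<in> N" for k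
  proof -
    have "bij_betw (\<lambda>u. if k \<in> A \<and> u \<in> A \<times> A then (\<lambda>(i, j). M i j k) u
        else \<sigma> ((\<lambda>(i, j). (Q i k, Q j k)) u)) (N \<times> N) (\<sigma> ` (X \<times> X))"
      using Q Q0 M(3) that
      by (intro patched_layer_bij[OF \<sigma> _ _ _ \<open>A \<times> A \<subseteq> N \<times> N\<close>])
        (auto intro: latin_square_pair_layers(3))
    then show ?thesis
      by (rule bij_betw_cong[THEN iffD1, rotated]) (auto simp: L_def split: if_splits)
  qed
  moreover have "card (\<sigma> ` (X \<times> X)) = n ^ 2"
    using X \<sigma>(1) by (simp add: card_image card_cartesian_product power2_eq_square)
  ultimately have "layer_rainbow n (\<sigma> ` (X \<times> X)) L"
    unfolding layer_rainbow_def N_def by blast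
  moreover have "extends_cube m S M n (\<sigma> ` (X \<times> X)) L"
    using \<sigma>(2) \<open>X0 \<times> X0 \<subseteq> X \<times> X\<close> unfolding extends_cube_def L_def A_def by auto
  ultimately show ?thesis
    by blast
qed

theorem theorem1:
  fixes m n :: nat and S :: "nat set" and M :: "nat \<Rightarrow> nat \<Rightarrow> nat \<Rightarrow> nat"
  assumes "0 < m" and "m < n" and "layer_rainbow m S M"
  shows "(\<exists>T L. layer_rainbow n T L \<and> extends_cube m S M n T L) \<longleftrightarrow> 2 * m \<le> n"
  using layer_rainbow_extension_imp_le[OF assms(2,3)]
    layer_rainbow_extension_exists[OF assms(1) _ assms(3)]
  by blast

end
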